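(* Let $n\ge1$, let $V$ be a finite set of values, let $\psi_{iv}\in\mathbb{R}$ ($1\le i\le n$, $v\in V$), let $W=(w_{vv'})$ be a real $|V|\times|V|$ matrix, fix $\alpha\in V$ and an integer $k$. Consider the integer program $$\max_{z}\ \sum_{i,v}(\psi_{iv}+w_{\alpha v})z_{iv}\quad\text{s.t.}\quad \sum_i z_{iv}\le k\ \ (\forall v\ne\alpha),\quad \sum_i z_{i\alpha}=k,\quad \sum_v z_{iv}=1\ \ (\forall i),\quad z_{iv}\in\{0,1\}.$$ Its LP relaxation (replacing $z_{iv}\in\{0,1\}$ by $0\le z_{iv}\le 1$) is tight, i.e. it has an integral optimal solution, so its optimal value equals that of the integer program. *)

theory Defs
  imports Complex_Main
begin

definition lp_feasible :: "nat \<Rightarrow> 'v set \<Rightarrow> 'v \<Rightarrow> int \<Rightarrow> (nat \<Rightarrow> 'v \<Rightarrow> real) \<Rightarrow> bool" where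
  "lp_feasible n V \<alpha> k z \<longleftrightarrow>
     (\<forall>i\<in>{1..n}. \<forall>v\<in>V. 0 \<le> z i v \<and> z i v \<le> 1) \<and>
     (\<forall>v\<in>V - {\<alpha>}. (\<Sum>i=1..n. z i v) \<le> real_of_int k) \<and>
     (\<Sum>i=1..n. z i \<alpha>) = real_of_int k \<and>
     (\<forall>i\<in>{1..n}. (\<Sum>v\<in>V. z i v) = 1)"

definition ip_feasible :: "nat \<Rightarrow> 'v set \<Rightarrow> 'v \<Rightarrow> int \<Rightarrow> (nat \<Rightarrow> 'v \<Rightarrow> real) \<Rightarrow> bool" where
  "ip_feasible n V \<alpha> k z \<longleftrightarrow>
     (\<forall>i\<in>{1..n}. \<forall>v\<in>V. z i v \<in> {0, 1}) \<and>
     (\<forall>v\<in>V - {\<alpha>}. (\<Sum>i=1..n. z i v) \<le> real_of_int k) \<and>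
     (\<Sum>i=1..n. z i \<alpha>) = real_of_int k \<and>
     (\<forall>i\<in>{1..n}. (\<Sum>v\<in>V. z i v) = 1)"

definition objective :: "nat \<Rightarrow> 'v set \<Rightarrow> (nat \<Rightarrow> 'v \<Rightarrow> real) \<Rightarrow> ('v \<Rightarrow> 'v \<Rightarrow> real) \<Rightarrow> 'v
     \<Rightarrow> (nat \<Rightarrow> 'v \<Rightarrow> real) \<Rightarrow> real" where
  "objective n V \<psi> W \<alpha> z = (\<Sum>i=1..n. \<Sum>v\<in>V. (\<psi> i v + W \<alpha> v) * z i v)"

end

theory Submission
  imports Defs
begin

text \<open>Adding a slack row 0 turns the constraints into prescribed row and column sums with
  integral values. In a feasible matrix, a fractional entry has another fractional entry in its
  row and in its column, so the fractional entries contain a closed alternating walk, whose signed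
  edge indicator has zero row and column sums. Moving along it, in the direction that does not
  decrease the objective, until some entry becomes integral keeps feasibility and strictly
  decreases the number of fractional entries; iterating yields an integral solution at least as
  good. As integral solutions have only finitely many objective values, the best of them is an
  optimum of the relaxation.\<close>

lemma exists_other_non_Ints_summand:
  assumes "finite A" and "a \<in> A" and "sum f A \<in> \<int>" and "f a \<notin> \<int>"
  shows "\<exists>b\<in>A. b \<noteq> a \<and> f b \<notin> \<int>"
proof (rule ccontr)
  assume "\<not> ?thesis"
  then have "sum f (A - {a}) \<in> \<int>" by (intro Ints_sum) auto
  moreover have "sum f A = f a + sum f (A - {a})" using assms by (simp add: sum.remove)
  ultimately show False using assms(3,4) by (metis Ints_diff add_diff_cancel_right')
qed

definition walk_circulation ::
    "(nat \<Rightarrow> 'a) \<Rightarrow> (nat \<Rightarrow> 'b) \<Rightarrow> nat \<Rightarrow> nat \<Rightarrow> 'a \<Rightarrow> 'b \<Rightarrow> real" where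
  "walk_circulation r c l m i v =
     (\<Sum>j\<in>{l..<m}. of_bool (r j = i \<and> c j = v) - of_bool (r (Suc j) = i \<and> c j = v))"

lemma walk_circulation_support:
  assumes "walk_circulation r c l m i v \<noteq> 0"
  shows "\<exists>j. c j = v \<and> (r j = i \<or> r (Suc j) = i)"
proof -
  from assms obtain j where
    "of_bool (r j = i \<and> c j = v) - of_bool (r (Suc j) = i \<and> c j = v) \<noteq> (0::real)"
    unfolding walk_circulation_def by (meson sum.not_neutral_contains_not_neutral)
  then show ?thesis by (cases "c j = v") auto
qed

lemma walk_circulation_row_sum:
  assumes "l \<le> m" and "r m = r l" and "finite V" and "\<And>j. c j \<in> V"
  shows "(\<Sum>v\<in>V. walk_circulation r c l m i v) = 0"
proof -
  have "(\<Sum>v\<in>V. of_bool (P \<and> c j = v)) = (of_bool P :: real)" for P j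
  proof -
    have "V \<inter> {v. P \<and> c j = v} = (if P then {c j} else {})" using assms(4)[of j] by auto
    then show ?thesis using \<open>finite V\<close> by simp
  qed
  then have "(\<Sum>v\<in>V. walk_circulation r c l m i v)
      = (\<Sum>j\<in>{l..<m}. of_bool (r j = i) - of_bool (r (Suc j) = i))"
    unfolding walk_circulation_def by (subst sum.swap) (simp add: sum_subtractf)
  also have "\<dots> = - (\<Sum>j\<in>{l..<m}. of_bool (r (Suc j) = i) - of_bool (r j = i))"
    by (simp flip: sum_negf)
  also have "\<dots> = 0"
    using assms(1,2) by (subst sum_Suc_diff'[where f = "\<lambda>j. of_bool (r j = i)"]) auto
  finally show ?thesis .
qed

lemma walk_circulation_column_sum:
  assumes "finite R" and "\<And>j. r j \<in> R"
  shows "(\<Sum>i\<in>R. walk_circulation r c l m i v) = 0"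
proof -
  have "(\<Sum>i\<in>R. of_bool (t = i \<and> P)) = (of_bool P :: real)" if "t \<in> R" for t P
  proof -
    have "R \<inter> {i. t = i \<and> P} = (if P then {t} else {})" using that by auto
    then show ?thesis using \<open>finite R\<close> by simp
  qed
  then show ?thesis unfolding walk_circulation_def
    by (subst sum.swap) (simp add: sum_subtractf assms(2))
qed

text \<open>A closed walk whose rows are distinct traverses the edge between the first two rows
  exactly once, so the circulation does not vanish there.\<close>

lemma walk_circulation_second_row:
  assumes "l < m" and closed: "r m = r l" and inj: "inj_on r {l..<m}"
    and r_step: "r (Suc l) \<noteq> r l" and c_step: "c (Suc l) \<noteq> c l"
  shows "walk_circulation r c l m (r (Suc l)) (c l) = -1"
proof -
  have "Suc l < m" using \<open>l < m\<close> closed r_step by (metis Suc_lessI)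
  have "{j \<in> {l..<m}. r j = r (Suc l) \<and> c j = c l} = {}"
    using inj c_step \<open>Suc l < m\<close> by (auto dest: inj_onD)
  moreover have "{j \<in> {l..<m}. r (Suc j) = r (Suc l) \<and> c j = c l} = {l}"
  proof -
    have "j = l" if "j \<in> {l..<m}" "r (Suc j) = r (Suc l)" for j
    proof (cases "Suc j < m")
      case True
      then show ?thesis using inj that \<open>Suc l < m\<close> by (auto dest: inj_onD)
    next
      case False
      then have "Suc j = m" using that by simp
      then show ?thesis using that closed r_step by simp
    qed
    then show ?thesis using \<open>l < m\<close> by auto
  qed
  ultimately show ?thesis
    by (simp add: walk_circulation_def sum_subtractf Int_def conj_commute)
qed

lemma alternating_walk_exists:
  assumes col: "\<And>i v. (i, v) \<in> E \<Longrightarrow> \<exists>i'. i' \<noteq> i \<and> (i', v) \<in> E"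
    and row: "\<And>i v. (i, v) \<in> E \<Longrightarrow> \<exists>v'. v' \<noteq> v \<and> (i, v') \<in> E"
    and start: "(i0, v0) \<in> E"
  obtains r c where "\<And>j. (r j, c j) \<in> E" and "\<And>j. (r (Suc j), c j) \<in> E"
    and "\<And>j. r (Suc j) \<noteq> r j" and "\<And>j. c (Suc j) \<noteq> c j"
proof -
  obtain nr where nr: "\<And>i v. (i, v) \<in> E \<Longrightarrow> nr i v \<noteq> i \<and> (nr i v, v) \<in> E"
    using col by metis
  obtain nc where nc: "\<And>i v. (i, v) \<in> E \<Longrightarrow> nc i v \<noteq> v \<and> (i, nc i v) \<in> E"
    using row by metis
  define w where "w = rec_nat (i0, v0) (\<lambda>_ (i, v). (nr i v, nc (nr i v) v))"
  define r where "r j = fst (w j)" for j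
  define c where "c j = snd (w j)" for j
  have r_Suc: "r (Suc j) = nr (r j) (c j)" and c_Suc: "c (Suc j) = nc (r (Suc j)) (c j)" for j
    by (simp_all add: r_def c_def w_def split_beta)
  have on_E: "(r j, c j) \<in> E" for j
  proof (induction j)
    case 0
    then show ?case using start by (simp add: r_def c_def w_def)
  next
    case (Suc j)
    then show ?case using nr nc r_Suc c_Suc by metis
  qed
  have E2: "(r (Suc j), c j) \<in> E" and r_ne: "r (Suc j) \<noteq> r j" for j
    using nr[OF on_E] r_Suc by auto
  have c_ne: "c (Suc j) \<noteq> c j" for j
    using nc[OF E2] c_Suc by metis
  show thesis using on_E E2 r_ne c_ne by (rule that[of r c])
qed

lemma first_repetition:
  fixes f :: "nat \<Rightarrow> 'a"
  assumes "finite (range f)"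
  obtains l m where "l < m" and "f m = f l" and "inj_on f {..<m}"
proof -
  define P where "P m \<longleftrightarrow> (\<exists>l<m. f l = f m)" for m
  define m where "m = (LEAST m. P m)"
  have "\<not> inj f" using assms finite_imageD infinite_UNIV_nat by blast
  then obtain a b where "a < b" "f a = f b" unfolding inj_def by (metis nat_neq_iff)
  then have "P b" unfolding P_def by blast
  then have "P m" unfolding m_def by (rule LeastI)
  then obtain l where "l < m" "f l = f m" unfolding P_def by blast
  moreover have "inj_on f {..<m}"
  proof (rule inj_onI)
    fix a b assume "a \<in> {..<m}" "b \<in> {..<m}" "f a = f b"
    then have "\<not> P a" "\<not> P b" using not_less_Least unfolding m_def by auto
    then show "a = b" using \<open>f a = f b\<close> unfolding P_def by (metis nat_neq_iff)
  qed
  ultimately show thesis using that by simp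
qed

definition fractional_entries :: "'a set \<Rightarrow> 'b set \<Rightarrow> ('a \<Rightarrow> 'b \<Rightarrow> real) \<Rightarrow> ('a \<times> 'b) set" where
  "fractional_entries R V x = {(i, v) \<in> R \<times> V. x i v \<notin> \<int>}"

lemma circulation_on_fractional_entries:
  fixes x :: "'a \<Rightarrow> 'b \<Rightarrow> real"
  assumes "finite R" and "finite V"
    and rows: "\<And>i. i \<in> R \<Longrightarrow> (\<Sum>v\<in>V. x i v) \<in> \<int>"
    and cols: "\<And>v. v \<in> V \<Longrightarrow> (\<Sum>i\<in>R. x i v) \<in> \<int>"
    and "fractional_entries R V x \<noteq> {}"
  obtains d :: "'a \<Rightarrow> 'b \<Rightarrow> real"
  where "\<exists>i v. d i v \<noteq> 0"
    and "\<And>i v. d i v \<noteq> 0 \<Longrightarrow> (i, v) \<in> fractional_entries R V x"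
    and "\<And>i. (\<Sum>v\<in>V. d i v) = 0" and "\<And>v. (\<Sum>i\<in>R. d i v) = 0"
proof -
  let ?E = "fractional_entries R V x"
  have col: "\<exists>i'. i' \<noteq> i \<and> (i', v) \<in> ?E" if "(i, v) \<in> ?E" for i v
    using exists_other_non_Ints_summand[of R i "\<lambda>i. x i v"] that \<open>finite R\<close> cols
    unfolding fractional_entries_def by auto
  have row: "\<exists>v'. v' \<noteq> v \<and> (i, v') \<in> ?E" if "(i, v) \<in> ?E" for i v
    using exists_other_non_Ints_summand[of V v "x i"] that \<open>finite V\<close> rows
    unfolding fractional_entries_def by auto
  obtain i0 v0 where start: "(i0, v0) \<in> ?E" using assms(5) by auto
  obtain r c where on_E: "\<And>j. (r j, c j) \<in> ?E" and "\<And>j. (r (Suc j), c j) \<in> ?E"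
    and r_step: "\<And>j. r (Suc j) \<noteq> r j" and c_step: "\<And>j. c (Suc j) \<noteq> c j"
    using alternating_walk_exists[OF col row start] by blast
  have r_in: "r j \<in> R" and c_in: "c j \<in> V" for j
    using on_E[of j] by (auto simp: fractional_entries_def)
  have "finite (range r)" using r_in \<open>finite R\<close> by (meson finite_subset image_subsetI)
  then obtain l m where "l < m" "r m = r l" "inj_on r {..<m}" by (rule first_repetition)
  then have "inj_on r {l..<m}" by (auto intro: inj_on_subset)
  let ?d = "walk_circulation r c l m"
  show thesis
  proof (rule that)
    show "\<exists>i v. ?d i v \<noteq> 0"
      using walk_circulation_second_row[OF \<open>l < m\<close> \<open>r m = r l\<close> \<open>inj_on r {l..<m}\<close> r_step[of l] c_step[of l]]
      by (intro exI[of _ "r (Suc l)"] exI[of _ "c l"]) simp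
    show "(i, v) \<in> ?E" if "?d i v \<noteq> 0" for i v
      using walk_circulation_support[OF that] on_E \<open>\<And>j. (r (Suc j), c j) \<in> ?E\<close> by auto
    show "(\<Sum>v\<in>V. ?d i v) = 0" for i
      using \<open>l < m\<close> \<open>r m = r l\<close> \<open>finite V\<close> c_in by (simp add: walk_circulation_row_sum)
    show "(\<Sum>i\<in>R. ?d i v) = 0" for v
      using \<open>finite R\<close> r_in by (simp add: walk_circulation_column_sum)
  qed
qed

lemma exists_step_reaching_integer:
  fixes x d :: "'p \<Rightarrow> real"
  assumes "finite S" and "S \<noteq> {}" and moving: "\<And>p. p \<in> S \<Longrightarrow> d p \<noteq> 0"
    and fractional: "\<And>p. p \<in> S \<Longrightarrow> x p \<notin> \<int>"
  obtains t where "t > 0"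
    and "\<And>p. p \<in> S \<Longrightarrow> of_int \<lfloor>x p\<rfloor> \<le> x p + t * d p \<and> x p + t * d p \<le> of_int \<lceil>x p\<rceil>"
    and "\<exists>p\<in>S. x p + t * d p \<in> \<int>"
proof -
  have floor_less: "of_int \<lfloor>x p\<rfloor> < x p" and less_ceiling: "x p < of_int \<lceil>x p\<rceil>" if "p \<in> S" for p
    using fractional[OF that] of_int_floor_le[of "x p"] le_of_int_ceiling[of "x p"]
    by (metis Ints_of_int order_less_le)+
  text \<open>The step after which coordinate p reaches the integer it is moving towards.\<close>
  define g where "g p = (if d p > 0 then (of_int \<lceil>x p\<rceil> - x p) / d p else (of_int \<lfloor>x p\<rfloor> - x p) / d p)" for p
  have g_pos: "g p > 0" if "p \<in> S" for p
    using floor_less[OF that] less_ceiling[OF that] moving[OF that]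
    by (auto simp: g_def divide_neg_neg)
  define t where "t = Min (g ` S)"
  have "t \<in> g ` S" unfolding t_def using assms(1,2) by simp
  then obtain p0 where "p0 \<in> S" "t = g p0" by blast
  have "t > 0" using \<open>p0 \<in> S\<close> \<open>t = g p0\<close> g_pos by simp
  have t_le: "t \<le> g p" if "p \<in> S" for p unfolding t_def using assms(1) that by simp
  show thesis
  proof
    show "t > 0" by fact
    show "of_int \<lfloor>x p\<rfloor> \<le> x p + t * d p \<and> x p + t * d p \<le> of_int \<lceil>x p\<rceil>" if "p \<in> S" for p
    proof (cases "d p > 0")
      case True
      then have "t * d p \<le> of_int \<lceil>x p\<rceil> - x p"
        using t_le[OF that] by (simp add: g_def pos_le_divide_eq)
      then show ?thesis using floor_less[OF that] \<open>t > 0\<close> True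
        by (smt (verit) mult_pos_pos)
    next
      case False
      then have "d p < 0" using moving[OF that] by simp
      then have "of_int \<lfloor>x p\<rfloor> - x p \<le> t * d p"
        using t_le[OF that] by (simp add: g_def neg_le_divide_eq)
      then show ?thesis using less_ceiling[OF that] \<open>t > 0\<close> \<open>d p < 0\<close>
        by (smt (verit) mult_pos_neg)
    qed
    have "x p0 + t * d p0 = (if d p0 > 0 then of_int \<lceil>x p0\<rceil> else of_int \<lfloor>x p0\<rfloor>)"
      using \<open>t = g p0\<close> moving[OF \<open>p0 \<in> S\<close>] by (simp add: g_def)
    then show "\<exists>p\<in>S. x p + t * d p \<in> \<int>" using \<open>p0 \<in> S\<close> by (metis Ints_of_int)
  qed
qed

lemma improving_circulation_on_fractional_entries:
  fixes x c :: "'a \<Rightarrow> 'b \<Rightarrow> real"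
  assumes "finite R" and "finite V"
    and "\<And>i. i \<in> R \<Longrightarrow> (\<Sum>v\<in>V. x i v) \<in> \<int>"
    and "\<And>v. v \<in> V \<Longrightarrow> (\<Sum>i\<in>R. x i v) \<in> \<int>"
    and "fractional_entries R V x \<noteq> {}"
  obtains d :: "'a \<Rightarrow> 'b \<Rightarrow> real"
  where "\<exists>i v. d i v \<noteq> 0"
    and "\<And>i v. d i v \<noteq> 0 \<Longrightarrow> (i, v) \<in> fractional_entries R V x"
    and "\<And>i. (\<Sum>v\<in>V. d i v) = 0" and "\<And>v. (\<Sum>i\<in>R. d i v) = 0"
    and "0 \<le> (\<Sum>i\<in>R. \<Sum>v\<in>V. c i v * d i v)"
proof -
  let ?gain = "\<lambda>d. \<Sum>i\<in>R. \<Sum>v\<in>V. c i v * d i v"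
  obtain d :: "'a \<Rightarrow> 'b \<Rightarrow> real" where "\<exists>i v. d i v \<noteq> 0"
    and "\<And>i v. d i v \<noteq> 0 \<Longrightarrow> (i, v) \<in> fractional_entries R V x"
    and "\<And>i. (\<Sum>v\<in>V. d i v) = 0" and "\<And>v. (\<Sum>i\<in>R. d i v) = 0"
    using circulation_on_fractional_entries[OF assms] by blast
  moreover define \<sigma> :: real where "\<sigma> = (if ?gain d \<ge> 0 then 1 else -1)"
  moreover have "?gain (\<lambda>i v. \<sigma> * d i v) = \<sigma> * ?gain d"
    by (simp add: sum_distrib_left algebra_simps)
  ultimately show thesis
    by (intro that[of "\<lambda>i v. \<sigma> * d i v"]) (auto simp flip: sum_distrib_left)
qed

lemma rounding_step:
  fixes x c :: "'a \<Rightarrow> 'b \<Rightarrow> real"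
  assumes "finite R" and "finite V"
    and "\<And>i. i \<in> R \<Longrightarrow> (\<Sum>v\<in>V. x i v) \<in> \<int>"
    and "\<And>v. v \<in> V \<Longrightarrow> (\<Sum>i\<in>R. x i v) \<in> \<int>"
    and "fractional_entries R V x \<noteq> {}"
  obtains x' where "\<And>i. (\<Sum>v\<in>V. x' i v) = (\<Sum>v\<in>V. x i v)"
    and "\<And>v. (\<Sum>i\<in>R. x' i v) = (\<Sum>i\<in>R. x i v)"
    and "\<And>i v. of_int \<lfloor>x i v\<rfloor> \<le> x' i v \<and> x' i v \<le> of_int \<lceil>x i v\<rceil>"
    and "fractional_entries R V x' \<subset> fractional_entries R V x"
    and "(\<Sum>i\<in>R. \<Sum>v\<in>V. c i v * x i v) \<le> (\<Sum>i\<in>R. \<Sum>v\<in>V. c i v * x' i v)"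
proof -
  let ?F = "fractional_entries R V x"
  let ?gain = "\<lambda>d. \<Sum>i\<in>R. \<Sum>v\<in>V. c i v * d i v"
  obtain d :: "'a \<Rightarrow> 'b \<Rightarrow> real" where d_nonzero: "\<exists>i v. d i v \<noteq> 0"
    and d_support: "\<And>i v. d i v \<noteq> 0 \<Longrightarrow> (i, v) \<in> ?F"
    and d_rows: "\<And>i. (\<Sum>v\<in>V. d i v) = 0" and d_cols: "\<And>v. (\<Sum>i\<in>R. d i v) = 0"
    and d_gain: "?gain d \<ge> 0"
    using improving_circulation_on_fractional_entries[OF assms] by blast
  define S where "S = {(i, v) \<in> R \<times> V. d i v \<noteq> 0}"
  have "S \<noteq> {}"
    using d_nonzero d_support unfolding S_def fractional_entries_def by blast
  moreover have "finite S" using assms(1,2) by (auto simp: S_def intro: finite_subset[of _ "R \<times> V"])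
  moreover have "case_prod d p \<noteq> 0" if "p \<in> S" for p using that by (auto simp: S_def)
  moreover have "case_prod x p \<notin> \<int>" if "p \<in> S" for p
    using that d_support by (auto simp: S_def fractional_entries_def)
  ultimately obtain t where "t > 0"
    and bounds: "\<And>p. p \<in> S \<Longrightarrow> of_int \<lfloor>case_prod x p\<rfloor> \<le> case_prod x p + t * case_prod d p
        \<and> case_prod x p + t * case_prod d p \<le> of_int \<lceil>case_prod x p\<rceil>"
    and hit: "\<exists>p\<in>S. case_prod x p + t * case_prod d p \<in> \<int>"
    using exists_step_reaching_integer[of S "case_prod d" "case_prod x"] by blast
  define x' where "x' i v = x i v + t * d i v" for i v
  show thesis
  proof
    show "(\<Sum>v\<in>V. x' i v) = (\<Sum>v\<in>V. x i v)" for i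
      using d_rows[of i] by (simp add: x'_def sum.distrib flip: sum_distrib_left)
    show "(\<Sum>i\<in>R. x' i v) = (\<Sum>i\<in>R. x i v)" for v
      using d_cols[of v] by (simp add: x'_def sum.distrib flip: sum_distrib_left)
    show "of_int \<lfloor>x i v\<rfloor> \<le> x' i v \<and> x' i v \<le> of_int \<lceil>x i v\<rceil>" for i v
      using bounds[of "(i, v)"] d_support[of i v]
      by (cases "d i v = 0") (auto simp: x'_def S_def fractional_entries_def)
    have "fractional_entries R V x' \<subseteq> ?F"
      using d_support by (force simp: x'_def fractional_entries_def)
    moreover from hit obtain i v where "(i, v) \<in> S" "x' i v \<in> \<int>"
      by (auto simp: x'_def)
    then have "(i, v) \<in> ?F - fractional_entries R V x'"
      using d_support by (auto simp: S_def fractional_entries_def)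
    ultimately show "fractional_entries R V x' \<subset> ?F" by blast
    have "?gain x' = ?gain x + t * ?gain d"
      by (simp add: x'_def algebra_simps sum.distrib sum_distrib_left)
    then show "?gain x \<le> ?gain x'"
      using d_gain \<open>t > 0\<close> by simp
  qed
qed

lemma integral_rounding:
  fixes x c :: "'a \<Rightarrow> 'b \<Rightarrow> real"
  assumes "finite R" and "finite V"
    and "\<And>i. i \<in> R \<Longrightarrow> (\<Sum>v\<in>V. x i v) \<in> \<int>"
    and "\<And>v. v \<in> V \<Longrightarrow> (\<Sum>i\<in>R. x i v) \<in> \<int>"
  shows "\<exists>y. (\<forall>i\<in>R. \<forall>v\<in>V. y i v \<in> \<int>)
    \<and> (\<forall>i v. of_int \<lfloor>x i v\<rfloor> \<le> y i v \<and> y i v \<le> of_int \<lceil>x i v\<rceil>)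
    \<and> (\<forall>i. (\<Sum>v\<in>V. y i v) = (\<Sum>v\<in>V. x i v)) \<and> (\<forall>v. (\<Sum>i\<in>R. y i v) = (\<Sum>i\<in>R. x i v))
    \<and> (\<Sum>i\<in>R. \<Sum>v\<in>V. c i v * x i v) \<le> (\<Sum>i\<in>R. \<Sum>v\<in>V. c i v * y i v)"
  using assms(3,4)
proof (induction "card (fractional_entries R V x)" arbitrary: x rule: less_induct)
  case less
  show ?case
  proof (cases "fractional_entries R V x = {}")
    case True
    then show ?thesis
      by (intro exI[of _ x]) (auto simp: fractional_entries_def)
  next
    case False
    obtain x' where rows': "\<And>i. (\<Sum>v\<in>V. x' i v) = (\<Sum>v\<in>V. x i v)"
      and cols': "\<And>v. (\<Sum>i\<in>R. x' i v) = (\<Sum>i\<in>R. x i v)"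
      and bounds': "\<And>i v. of_int \<lfloor>x i v\<rfloor> \<le> x' i v \<and> x' i v \<le> of_int \<lceil>x i v\<rceil>"
      and smaller: "fractional_entries R V x' \<subset> fractional_entries R V x"
      and gain': "(\<Sum>i\<in>R. \<Sum>v\<in>V. c i v * x i v) \<le> (\<Sum>i\<in>R. \<Sum>v\<in>V. c i v * x' i v)"
      using rounding_step[OF assms(1,2) less.prems False] by blast
    have "finite (fractional_entries R V x)"
      using assms(1,2) by (auto simp: fractional_entries_def intro: finite_subset[of _ "R \<times> V"])
    then have "card (fractional_entries R V x') < card (fractional_entries R V x)"
      using smaller by (rule psubset_card_mono)
    then obtain y where "\<forall>i\<in>R. \<forall>v\<in>V. y i v \<in> \<int>"
      and y_bounds: "\<And>i v. of_int \<lfloor>x' i v\<rfloor> \<le> y i v \<and> y i v \<le> of_int \<lceil>x' i v\<rceil>"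
      and "\<forall>i. (\<Sum>v\<in>V. y i v) = (\<Sum>v\<in>V. x' i v)" "\<forall>v. (\<Sum>i\<in>R. y i v) = (\<Sum>i\<in>R. x' i v)"
      and "(\<Sum>i\<in>R. \<Sum>v\<in>V. c i v * x' i v) \<le> (\<Sum>i\<in>R. \<Sum>v\<in>V. c i v * y i v)"
      using less.hyps[of x'] less.prems by (auto simp: rows' cols')
    moreover have "of_int \<lfloor>x i v\<rfloor> \<le> y i v \<and> y i v \<le> of_int \<lceil>x i v\<rceil>" for i v
    proof -
      have "\<lfloor>x i v\<rfloor> \<le> \<lfloor>x' i v\<rfloor>" and "\<lceil>x' i v\<rceil> \<le> \<lceil>x i v\<rceil>"
        using bounds'[of i v] by (simp_all add: le_floor_iff ceiling_le_iff)
      then show ?thesis using y_bounds[rule_format, of i v] by (meson of_int_le_iff order_trans)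
    qed
    ultimately show ?thesis using rows' cols' gain' by (intro exI[of _ y]) auto
  qed
qed

definition slack_extension :: "nat \<Rightarrow> int \<Rightarrow> (nat \<Rightarrow> 'v \<Rightarrow> real) \<Rightarrow> nat \<Rightarrow> 'v \<Rightarrow> real" where
  "slack_extension n k z i v = (if i = 0 then of_int k - (\<Sum>i'=1..n. z i' v) else z i v)"

lemma sum_atLeast0_atMost_split:
  fixes f :: "nat \<Rightarrow> 'a::comm_monoid_add"
  shows "(\<Sum>i=0..n. f i) = f 0 + (\<Sum>i=1..n. f i)"
  using sum.atLeast_Suc_atMost[of 0 n f] by simp

lemma slack_extension_column_sum: "(\<Sum>i=0..n. slack_extension n k z i v) = of_int k"
  by (simp add: sum_atLeast0_atMost_split slack_extension_def)

lemma objective_as_sum_from_row_zero: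
  "objective n V \<psi> W \<alpha> z = (\<Sum>i=0..n. \<Sum>v\<in>V. (if i = 0 then 0 else \<psi> i v + W \<alpha> v) * z i v)"
  by (simp add: objective_def sum_atLeast0_atMost_split)

lemma Ints_between_0_1: "0 \<le> x \<Longrightarrow> x \<le> 1 \<Longrightarrow> x \<in> \<int> \<Longrightarrow> x \<in> {0, 1::real}"
  by (auto elim!: Ints_cases)

lemma slack_extension_row_sum_Ints:
  assumes lp: "lp_feasible n V \<alpha> k z" and "i \<in> {0..n}"
  shows "(\<Sum>v\<in>V. slack_extension n k z i v) \<in> \<int>"
proof (cases "i = 0")
  case True
  have "(\<Sum>v\<in>V. \<Sum>i'=1..n. z i' v) = (\<Sum>i'=1..n. \<Sum>v\<in>V. z i' v)" by (rule sum.swap)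
  also have "\<dots> = (\<Sum>i'=1..n. 1)" using lp by (intro sum.cong) (auto simp: lp_feasible_def)
  finally show ?thesis using True by (simp add: slack_extension_def sum_subtractf)
next
  case False
  then show ?thesis using lp assms(2) by (simp add: slack_extension_def lp_feasible_def)
qed

lemma ip_feasible_if_rounds_slack_extension:
  assumes lp: "lp_feasible n V \<alpha> k z"
    and y_int: "\<And>i v. i \<in> {1..n} \<Longrightarrow> v \<in> V \<Longrightarrow> y i v \<in> \<int>"
    and y_bounds: "\<And>i v. of_int \<lfloor>slack_extension n k z i v\<rfloor> \<le> y i v
                        \<and> y i v \<le> of_int \<lceil>slack_extension n k z i v\<rceil>"
    and y_rows: "\<And>i. i \<in> {1..n} \<Longrightarrow> (\<Sum>v\<in>V. y i v) = (\<Sum>v\<in>V. z i v)"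
    and y_cols: "\<And>v. (\<Sum>i=0..n. y i v) = of_int k"
  shows "ip_feasible n V \<alpha> k y"
  unfolding ip_feasible_def
proof (intro conjI ballI)
  fix i v assume i: "i \<in> {1..n}" and v: "v \<in> V"
  have "0 \<le> real_of_int \<lfloor>z i v\<rfloor>" "real_of_int \<lceil>z i v\<rceil> \<le> 1"
    using lp i v by (simp_all add: lp_feasible_def)
  moreover have "real_of_int \<lfloor>z i v\<rfloor> \<le> y i v" "y i v \<le> real_of_int \<lceil>z i v\<rceil>"
    using y_bounds[of i v] i by (simp_all add: slack_extension_def)
  ultimately have "0 \<le> y i v" "y i v \<le> 1" by linarith+
  then show "y i v \<in> {0, 1}" using y_int[OF i v] by (rule Ints_between_0_1)
next
  let ?x = "slack_extension n k z"
  fix v assume "v \<in> V - {\<alpha>}"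
  then have "0 \<le> ?x 0 v" using lp by (simp add: lp_feasible_def slack_extension_def)
  then have "0 \<le> y 0 v" using y_bounds[of 0 v] by (meson of_int_0_le_iff zero_le_floor order_trans)
  then show "(\<Sum>i=1..n. y i v) \<le> of_int k"
    using y_cols[of v] by (simp add: sum_atLeast0_atMost_split)
next
  have "slack_extension n k z 0 \<alpha> = 0" using lp by (simp add: lp_feasible_def slack_extension_def)
  then have "y 0 \<alpha> = 0" using y_bounds[of 0 \<alpha>] by simp
  then show "(\<Sum>i=1..n. y i \<alpha>) = of_int k"
    using y_cols[of \<alpha>] by (simp add: sum_atLeast0_atMost_split)
next
  fix i assume "i \<in> {1..n}"
  then show "(\<Sum>v\<in>V. y i v) = 1" using y_rows lp by (simp add: lp_feasible_def)
qed

lemma lp_solution_rounds_to_ip_solution: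
  assumes "finite V" and lp: "lp_feasible n V \<alpha> k z"
  shows "\<exists>z'. ip_feasible n V \<alpha> k z' \<and> objective n V \<psi> W \<alpha> z \<le> objective n V \<psi> W \<alpha> z'"
proof -
  let ?x = "slack_extension n k z"
  let ?c = "\<lambda>i v. if i = 0 then 0 else \<psi> i v + W \<alpha> v"
  have x_rows: "(\<Sum>v\<in>V. ?x i v) \<in> \<int>" if "i \<in> {0..n}" for i
    using slack_extension_row_sum_Ints[OF lp that] .
  have x_cols: "(\<Sum>i=0..n. ?x i v) \<in> \<int>" if "v \<in> V" for v
    by (simp add: slack_extension_column_sum)
  obtain y where y_int: "\<forall>i\<in>{0..n}. \<forall>v\<in>V. y i v \<in> \<int>"
    and y_bounds: "\<forall>i v. of_int \<lfloor>?x i v\<rfloor> \<le> y i v \<and> y i v \<le> of_int \<lceil>?x i v\<rceil>"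
    and y_rows: "\<forall>i. (\<Sum>v\<in>V. y i v) = (\<Sum>v\<in>V. ?x i v)"
    and y_cols: "\<forall>v. (\<Sum>i=0..n. y i v) = of_int k"
    and y_gain: "(\<Sum>i=0..n. \<Sum>v\<in>V. ?c i v * ?x i v) \<le> (\<Sum>i=0..n. \<Sum>v\<in>V. ?c i v * y i v)"
    using integral_rounding[where c = ?c, OF finite_atLeastAtMost \<open>finite V\<close> x_rows x_cols]
    by (auto simp: slack_extension_column_sum)
  have "ip_feasible n V \<alpha> k y"
  proof (rule ip_feasible_if_rounds_slack_extension[OF lp])
    show "(\<Sum>v\<in>V. y i v) = (\<Sum>v\<in>V. z i v)" if "i \<in> {1..n}" for i
      using y_rows that by (simp add: slack_extension_def)
  qed (use y_int y_bounds y_cols in auto)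
  moreover have "(\<Sum>i=0..n. \<Sum>v\<in>V. ?c i v * ?x i v) = (\<Sum>i=0..n. \<Sum>v\<in>V. ?c i v * z i v)"
    by (intro sum.cong) (auto simp: slack_extension_def)
  with y_gain have "objective n V \<psi> W \<alpha> z \<le> objective n V \<psi> W \<alpha> y"
    by (simp only: objective_as_sum_from_row_zero)
  ultimately show ?thesis by blast
qed

lemma ip_feasible_imp_lp_feasible: "ip_feasible n V \<alpha> k z \<Longrightarrow> lp_feasible n V \<alpha> k z"
  by (force simp: ip_feasible_def lp_feasible_def)

lemma finite_ip_objective_values:
  assumes "finite V"
  shows "finite (objective n V \<psi> W \<alpha> ` {z. ip_feasible n V \<alpha> k z})"
proof (rule finite_subset)
  let ?weight = "\<lambda>A. \<Sum>(i, v)\<in>A. \<psi> i v + W \<alpha> v"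
  show "finite (?weight ` Pow ({1..n} \<times> V))" using assms by simp
  show "objective n V \<psi> W \<alpha> ` {z. ip_feasible n V \<alpha> k z} \<subseteq> ?weight ` Pow ({1..n} \<times> V)"
  proof clarify
    fix z assume ip: "ip_feasible n V \<alpha> k z"
    have "objective n V \<psi> W \<alpha> z = (\<Sum>(i, v)\<in>{1..n} \<times> V. (\<psi> i v + W \<alpha> v) * z i v)"
      by (simp add: objective_def sum.cartesian_product)
    also have "\<dots> = (\<Sum>(i, v)\<in>{1..n} \<times> V. if z i v = 1 then \<psi> i v + W \<alpha> v else 0)"
      using ip by (intro sum.cong refl) (force simp: ip_feasible_def)
    also have "\<dots> = ?weight {p \<in> {1..n} \<times> V. case_prod z p = 1}"
      using assms by (subst sum.inter_filter) (auto simp: case_prod_beta intro!: sum.cong)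
    finally show "objective n V \<psi> W \<alpha> z \<in> ?weight ` Pow ({1..n} \<times> V)" by blast
  qed
qed

lemma ip_optimum_dominates_lp_solutions:
  assumes "finite V" and "\<exists>z. lp_feasible n V \<alpha> k z"
  obtains z where "ip_feasible n V \<alpha> k z"
    and "\<And>z'. lp_feasible n V \<alpha> k z' \<Longrightarrow> objective n V \<psi> W \<alpha> z' \<le> objective n V \<psi> W \<alpha> z"
proof -
  let ?obj = "objective n V \<psi> W \<alpha>"
  let ?I = "{z. ip_feasible n V \<alpha> k z}"
  have finite_values: "finite (?obj ` ?I)"
    by (rule finite_ip_objective_values[OF assms(1)])
  have "?obj ` ?I \<noteq> {}"
    using assms(2) lp_solution_rounds_to_ip_solution[OF assms(1)] by blast
  then have "Max (?obj ` ?I) \<in> ?obj ` ?I" by (rule Max_in[OF finite_values])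
  then obtain z where "z \<in> ?I" and z_max: "?obj z = Max (?obj ` ?I)" by auto
  have ip_le: "?obj z'' \<le> ?obj z" if "z'' \<in> ?I" for z''
    using z_max finite_values that by simp
  show thesis
  proof (rule that)
    show "ip_feasible n V \<alpha> k z" using \<open>z \<in> ?I\<close> by simp
    fix z' assume "lp_feasible n V \<alpha> k z'"
    then obtain z'' where "z'' \<in> ?I" and "?obj z' \<le> ?obj z''"
      using lp_solution_rounds_to_ip_solution[OF assms(1)] by blast
    with ip_le show "?obj z' \<le> ?obj z" by fastforce
  qed
qed

theorem theorem11:
  fixes n :: nat and V :: "'v set" and \<psi> :: "nat \<Rightarrow> 'v \<Rightarrow> real"
    and W :: "'v \<Rightarrow> 'v \<Rightarrow> real" and \<alpha> :: 'v and k :: int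
  assumes "n \<ge> 1" and "finite V" and "\<alpha> \<in> V"
    and "\<exists>z. lp_feasible n V \<alpha> k z"
  shows "(\<exists>z. ip_feasible n V \<alpha> k z \<and>
             (\<forall>z'. lp_feasible n V \<alpha> k z' \<longrightarrow> objective n V \<psi> W \<alpha> z' \<le> objective n V \<psi> W \<alpha> z)) \<and>
         (SUP z\<in>{z. lp_feasible n V \<alpha> k z}. objective n V \<psi> W \<alpha> z)
         = (SUP z\<in>{z. ip_feasible n V \<alpha> k z}. objective n V \<psi> W \<alpha> z)"
proof -
  let ?obj = "objective n V \<psi> W \<alpha>"
  obtain z where ip: "ip_feasible n V \<alpha> k z"
    and lp_le: "\<And>z'. lp_feasible n V \<alpha> k z' \<Longrightarrow> ?obj z' \<le> ?obj z"
    using ip_optimum_dominates_lp_solutions[OF assms(2,4)] by blast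
  have "(SUP z\<in>{z. lp_feasible n V \<alpha> k z}. ?obj z) = ?obj z"
    using ip ip_feasible_imp_lp_feasible[OF ip] lp_le by (intro cSup_eq_maximum) auto
  moreover have "(SUP z\<in>{z. ip_feasible n V \<alpha> k z}. ?obj z) = ?obj z"
    using ip lp_le[OF ip_feasible_imp_lp_feasible] by (intro cSup_eq_maximum) auto
  ultimately show ?thesis using ip lp_le by auto
qed

end
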